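(* Assume the feasible set of the mixed-integer semidefinite program $$\min\{\langle C,X\rangle : \mathcal{A}(X)=b,\ X\succeq \mathbf{0},\ X_{ij}\in B_{ij}\ \forall (i,j)\in\mathcal{J}\}$$ is nonempty and bounded. Let $z_{LD}=\sup\{g(S,\lambda): S\succeq\mathbf{0},\ \lambda\in\mathbb{R}^{m_1}\}$ with $g(S,\lambda)=\min\{\langle C,X\rangle-\langle S,X\rangle+\lambda^\top(\mathcal{A}_1(X)-b_1): X\in P\}$, and let $\hat z$ denote the optimal value of $$\min\{\langle C,X\rangle: \mathcal{A}_1(X)=b_1,\ X\succeq\mathbf{0},\ X\in\mathrm{conv}(P)\},$$ provided it exists. Then $z_{LD}=\hat z$.
   Context: $\mathcal{S}^n$ denotes the real symmetric $n\times n$ matrices with $\langle X,Y\rangle=\mathrm{tr}(XY)$; $X\succeq\mathbf{0}$ means positive semidefinite. $C\in\mathcal{S}^n$, $b\in\mathbb{R}^m$, $\mathcal{A}:\mathcal{S}^n\to\mathbb{R}^m$ linear with $\mathcal{A}(X)_i=\langle A_i,X\rangle$. $\mathcal{J}\subseteq[n]\times[n]$ and for $(i,j)\in\mathcal{J}$, $B_{ij}\subseteq\mathbb{Z}$ is a finite set. The constraints $\mathcal{A}(X)=b$ are split into $\mathcal{A}_1(X)=b_1$ ($b_1\in\mathbb{R}^{m_1}$) and $\mathcal{A}_2(X)=b_2$, and $P=\{X\in\mathcal{S}^n:\mathcal{A}_2(X)=b_2,\ X_{ij}\in B_{ij}\ \forall(i,j)\in\mathcal{J}\}$, which is assumed bounded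 (e.g. after adding bounds on the continuous variables to $\mathcal{A}_2(X)=b_2$). *)

theory Defs
  imports "HOL-Analysis.Analysis"
begin

definition sym_mat :: "real^'n^'n \<Rightarrow> bool" where
  "sym_mat X \<longleftrightarrow> transpose X = X"

definition frob :: "real^'n^'n \<Rightarrow> real^'n^'n \<Rightarrow> real" where
  "frob X Y = trace (X ** Y)"

definition psd :: "real^'n^'n \<Rightarrow> bool" where
  "psd X \<longleftrightarrow> sym_mat X \<and> (\<forall>x. 0 \<le> x \<bullet> (X *v x))"

text \<open>The set P = {X in S^n : A2(X) = b2, X_ij in B_ij for (i,j) in J}; the m2 constraints
  of A2 are given by matrices A2 k, k < m2.\<close>
definition Pset :: "nat \<Rightarrow> (nat \<Rightarrow> real^'n^'n) \<Rightarrow> (nat \<Rightarrow> real) \<Rightarrow> ('n \<times> 'n) set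
                    \<Rightarrow> ('n \<Rightarrow> 'n \<Rightarrow> int set) \<Rightarrow> (real^'n^'n) set" where
  "Pset m2 A2 b2 J B = {X. sym_mat X \<and> (\<forall>k<m2. frob (A2 k) X = b2 k)
                           \<and> (\<forall>(i,j)\<in>J. X$i$j \<in> real_of_int ` B i j)}"

definition misdp_feas :: "nat \<Rightarrow> (nat \<Rightarrow> real^'n^'n) \<Rightarrow> (nat \<Rightarrow> real) \<Rightarrow>
     nat \<Rightarrow> (nat \<Rightarrow> real^'n^'n) \<Rightarrow> (nat \<Rightarrow> real) \<Rightarrow> ('n \<times> 'n) set
     \<Rightarrow> ('n \<Rightarrow> 'n \<Rightarrow> int set) \<Rightarrow> (real^'n^'n) set" where
  "misdp_feas m1 A1 b1 m2 A2 b2 J B =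
     {X. sym_mat X \<and> (\<forall>k<m1. frob (A1 k) X = b1 k) \<and> (\<forall>k<m2. frob (A2 k) X = b2 k)
         \<and> psd X \<and> (\<forall>(i,j)\<in>J. X$i$j \<in> real_of_int ` B i j)}"

text \<open>Lagrangian dual function g(S,lambda) = min over P (taken as an infimum in ereal;
  it is attained since P is compact and nonempty).\<close>
definition lag_g :: "real^'n^'n \<Rightarrow> nat \<Rightarrow> (nat \<Rightarrow> real^'n^'n) \<Rightarrow> (nat \<Rightarrow> real) \<Rightarrow>
     (real^'n^'n) set \<Rightarrow> real^'n^'n \<Rightarrow> (nat \<Rightarrow> real) \<Rightarrow> ereal" where
  "lag_g C m1 A1 b1 P S lam =
     (INF X\<in>P. ereal (frob C X - frob S X + (\<Sum>k<m1. lam k * (frob (A1 k) X - b1 k))))"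

text \<open>z_LD = sup over S psd and lambda in R^m1 (lambda represented by its first m1 entries).\<close>
definition z_LD :: "real^'n^'n \<Rightarrow> nat \<Rightarrow> (nat \<Rightarrow> real^'n^'n) \<Rightarrow> (nat \<Rightarrow> real) \<Rightarrow>
     (real^'n^'n) set \<Rightarrow> ereal" where
  "z_LD C m1 A1 b1 P =
     (SUP (S, lam) \<in> {S. psd S} \<times> UNIV. lag_g C m1 A1 b1 P S lam)"

definition relax_feas :: "nat \<Rightarrow> (nat \<Rightarrow> real^'n^'n) \<Rightarrow> (nat \<Rightarrow> real) \<Rightarrow>
     (real^'n^'n) set \<Rightarrow> (real^'n^'n) set" where
  "relax_feas m1 A1 b1 P =
     {X. (\<forall>k<m1. frob (A1 k) X = b1 k) \<and> psd X \<and> X \<in> convex hull P}"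

end

theory Submission
  imports Defs
begin

(* Weak duality: g(S,lambda) is the minimum over P of an affine function of X, hence at most its
   value at any point of conv P. At the relaxed optimum Xh that value is <C,Xh> - <S,Xh>, which is
   at most <C,Xh> because the trace inner product of two psd matrices is nonnegative (shown by
   peeling off rank-one terms, as in an LDL^T factorization).
   Strong duality: for r < <C,Xh> the point (r,0,0) lies outside the set of triples
   (<C,X> + s, X - Y, X - W) with X in conv P, s >= 0, Y psd and A1(W) = b1. This set is convex,
   and closed because conv P is compact, so no Slater condition is needed. A hyperplane separating
   the point from the set, scaled by its (necessarily positive) first coordinate, yields a psd S and
   multipliers lambda with g(S,lambda) >= r. *)

definition bilinear_form ::
    "'a set \<Rightarrow> ('a \<Rightarrow> 'a \<Rightarrow> real) \<Rightarrow> ('a \<Rightarrow> real) \<Rightarrow> ('a \<Rightarrow> real) \<Rightarrow> real" where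
  "bilinear_form I M x y = (\<Sum>i\<in>I. \<Sum>j\<in>I. x i * M i j * y j)"

(* Positive semidefiniteness of the principal submatrix indexed by I; allowing arbitrary index sets
   makes the trace inequality provable by induction over I. *)
definition psd_on :: "'a set \<Rightarrow> ('a \<Rightarrow> 'a \<Rightarrow> real) \<Rightarrow> bool" where
  "psd_on I M \<longleftrightarrow> (\<forall>i\<in>I. \<forall>j\<in>I. M i j = M j i) \<and> (\<forall>x. 0 \<le> bilinear_form I M x x)"

lemma bilinear_form_unit_right:
  "finite I \<Longrightarrow> a \<in> I \<Longrightarrow> bilinear_form I M x (indicator {a}) = (\<Sum>i\<in>I. x i * M i a)"
  by (simp add: bilinear_form_def indicator_def if_distrib[of "\<lambda>y. _ * y"] cong: if_cong)

lemma bilinear_form_unit_unit: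
  "finite I \<Longrightarrow> a \<in> I \<Longrightarrow> b \<in> I \<Longrightarrow> bilinear_form I M (indicator {a}) (indicator {b}) = M a b"
  by (simp add: bilinear_form_unit_right indicator_def if_distrib[of "\<lambda>y. y * _"] cong: if_cong)

lemma bilinear_form_swap:
  "\<forall>i\<in>I. \<forall>j\<in>I. M i j = M j i \<Longrightarrow> bilinear_form I M y x = bilinear_form I M x y"
  unfolding bilinear_form_def by (subst sum.swap) (auto simp: mult_ac intro!: sum.cong)

lemma bilinear_form_add_scaled:
  assumes "\<forall>i\<in>I. \<forall>j\<in>I. M i j = M j i"
  shows "bilinear_form I M (\<lambda>i. x i + t * y i) (\<lambda>i. x i + t * y i) =
    bilinear_form I M x x + 2 * bilinear_form I M x y * t + bilinear_form I M y y * t\<^sup>2"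
proof -
  have "bilinear_form I M (\<lambda>i. x i + t * y i) (\<lambda>i. x i + t * y i) =
    bilinear_form I M x x + (bilinear_form I M x y + bilinear_form I M y x) * t
      + bilinear_form I M y y * t\<^sup>2"
    unfolding bilinear_form_def
    by (simp add: algebra_simps power2_eq_square sum.distrib sum_distrib_left sum_distrib_right)
  then show ?thesis using bilinear_form_swap[OF assms] by simp
qed

lemma discriminant_nonpos_if_nonneg:
  fixes a b c :: real
  assumes "0 \<le> c" and nonneg: "\<And>t. 0 \<le> a + 2 * b * t + c * t\<^sup>2"
  shows "b\<^sup>2 \<le> a * c"
proof (cases "c = 0")
  case True
  have "b = 0"
  proof (rule ccontr)
    assume "b \<noteq> 0"
    with nonneg[of "- (a + 1) / (2 * b)"] True show False by (simp add: field_simps)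
  qed
  with True show ?thesis by simp
next
  case False
  with assms(1) have "0 < c" by simp
  with nonneg[of "- b / c"] show ?thesis
    by (simp add: field_simps power2_eq_square)
qed

lemma psd_on_cauchy_schwarz:
  assumes "psd_on I M"
  shows "(bilinear_form I M x y)\<^sup>2 \<le> bilinear_form I M x x * bilinear_form I M y y"
proof (rule discriminant_nonpos_if_nonneg)
  show "0 \<le> bilinear_form I M y y" using assms unfolding psd_on_def by blast
  show "0 \<le> bilinear_form I M x x + 2 * bilinear_form I M x y * t
      + bilinear_form I M y y * t\<^sup>2" for t
    using assms bilinear_form_add_scaled[of I M x t y] unfolding psd_on_def by metis
qed

lemma psd_on_rank_one_reduction:
  assumes "finite I" "a \<in> I" "psd_on I M"
  obtains v where "psd_on I (\<lambda>i j. M i j - v i * v j)" and "\<forall>j\<in>I. M a j = v a * v j"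
proof
  have sym: "\<forall>i\<in>I. \<forall>j\<in>I. M i j = M j i"
    using assms(3) unfolding psd_on_def by blast
  have CS: "(bilinear_form I M x (indicator {a}))\<^sup>2 \<le> bilinear_form I M x x * M a a" for x
    using psd_on_cauchy_schwarz[OF assms(3), of x "indicator {a}"]
      bilinear_form_unit_unit[OF assms(1,2,2)]
    by simp
  have "0 \<le> M a a"
    using assms bilinear_form_unit_unit[OF assms(1,2,2)] unfolding psd_on_def by metis
  \<comment> \<open>If \<open>M a a = 0\<close>, then \<open>v = 0\<close> because division by zero yields zero.\<close>
  define v where "v i = M i a / sqrt (M a a)" for i
  have vv: "v i * v j = M i a * M j a / M a a" for i j
    unfolding v_def using \<open>0 \<le> M a a\<close> by (simp add: real_sqrt_mult[symmetric])
  show "\<forall>j\<in>I. M a j = v a * v j"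
  proof
    fix j assume j: "j \<in> I"
    show "M a j = v a * v j"
    proof (cases "M a a = 0")
      case True
      have "(M j a)\<^sup>2 \<le> 0"
        using CS[of "indicator {j}"] True
        by (simp add: bilinear_form_unit_unit[OF assms(1) j assms(2)])
      then show ?thesis using True sym j assms(2) by (simp add: vv)
    next
      case False
      then show ?thesis using sym j assms(2) by (simp add: vv)
    qed
  qed
  have "bilinear_form I (\<lambda>i j. M i j - v i * v j) x x
      = bilinear_form I M x x - (bilinear_form I M x (indicator {a}))\<^sup>2 / M a a" for x
    unfolding bilinear_form_unit_right[OF assms(1,2)] unfolding bilinear_form_def vv
    by (simp add: algebra_simps power2_eq_square sum_subtractf sum_distrib_left sum_distrib_right
        sum_divide_distrib)
  moreover have "(bilinear_form I M x (indicator {a}))\<^sup>2 / M a a \<le> bilinear_form I M x x" for x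
    using CS[of x] \<open>0 \<le> M a a\<close> assms(3) unfolding psd_on_def
    by (cases "M a a = 0") (auto simp: divide_le_eq mult.commute)
  ultimately show "psd_on I (\<lambda>i j. M i j - v i * v j)"
    using sym unfolding psd_on_def by (simp add: mult.commute)
qed

lemma psd_on_subset:
  assumes "finite I" "F \<subseteq> I" "psd_on I M"
  shows "psd_on F M"
  unfolding psd_on_def
proof (intro conjI allI)
  show "\<forall>i\<in>F. \<forall>j\<in>F. M i j = M j i" using assms(2,3) unfolding psd_on_def by blast
  fix x :: "'a \<Rightarrow> real"
  let ?y = "\<lambda>i. if i \<in> F then x i else 0"
  have "bilinear_form I M ?y ?y = bilinear_form F M x x"
    unfolding bilinear_form_def
    by (auto intro!: sum.mono_neutral_cong_right[OF assms(1,2)] sum.neutral)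
  then show "0 \<le> bilinear_form F M x x" using assms(3) unfolding psd_on_def by metis
qed

lemma psd_on_frobenius_nonneg:
  assumes "finite I" "psd_on I S" "psd_on I X"
  shows "0 \<le> (\<Sum>i\<in>I. \<Sum>j\<in>I. S i j * X i j)"
  using assms
proof (induction I arbitrary: X rule: finite_induct)
  case empty
  then show ?case by simp
next
  case (insert a F)
  let ?I = "insert a F"
  obtain v where X'_psd: "psd_on ?I (\<lambda>i j. X i j - v i * v j)"
    and row: "\<forall>j\<in>?I. X a j = v a * v j"
    by (rule psd_on_rank_one_reduction[OF finite.insertI[OF insert.hyps(1)] insertI1
          insert.prems(2)])
  define X' where "X' i j = X i j - v i * v j" for i j
  have X'_a: "X' a j = 0" "X' j a = 0" if "j \<in> ?I" for j
  proof -
    have "X j a = X a j" using that insert.prems(2) unfolding psd_on_def by blast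
    moreover have "X a j = v a * v j" using row that by blast
    ultimately show "X' a j = 0" "X' j a = 0" unfolding X'_def by (simp_all add: mult.commute)
  qed
  have "(\<Sum>i\<in>?I. \<Sum>j\<in>?I. S i j * X i j)
      = (\<Sum>i\<in>?I. \<Sum>j\<in>?I. S i j * X' i j) + bilinear_form ?I S v v"
    unfolding bilinear_form_def X'_def by (simp add: right_diff_distrib sum_subtractf mult_ac)
  also have "(\<Sum>i\<in>?I. \<Sum>j\<in>?I. S i j * X' i j) = (\<Sum>i\<in>F. \<Sum>j\<in>F. S i j * X' i j)"
    using insert.hyps X'_a by simp
  finally have decomp: "(\<Sum>i\<in>?I. \<Sum>j\<in>?I. S i j * X i j)
      = (\<Sum>i\<in>F. \<Sum>j\<in>F. S i j * X' i j) + bilinear_form ?I S v v" .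
  have "0 \<le> (\<Sum>i\<in>F. \<Sum>j\<in>F. S i j * X' i j)"
  proof (rule insert.IH)
    show "psd_on F S" "psd_on F X'"
      using psd_on_subset[OF finite.insertI[OF insert.hyps(1)] subset_insertI]
        insert.prems(1) X'_psd
      unfolding X'_def by blast+
  qed
  moreover have "0 \<le> bilinear_form ?I S v v" using insert.prems(1) unfolding psd_on_def by blast
  ultimately show ?case unfolding decomp by linarith
qed

lemma sym_mat_iff: "sym_mat X \<longleftrightarrow> (\<forall>i j. X$i$j = X$j$i)"
  unfolding sym_mat_def transpose_def vec_eq_iff by auto

lemma inner_matrix_eq_sum:
  fixes A X :: "real^'n^'m"
  shows "A \<bullet> X = (\<Sum>i\<in>UNIV. \<Sum>j\<in>UNIV. A$i$j * X$i$j)"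
  unfolding inner_vec_def by (simp add: inner_real_def)

lemma inner_mult_vec_eq_sum:
  fixes A :: "real^'n^'m"
  shows "x \<bullet> (A *v y) = (\<Sum>i\<in>UNIV. \<Sum>j\<in>UNIV. x$i * A$i$j * y$j)"
  unfolding inner_vec_def matrix_vector_mult_def
  by (simp add: inner_real_def sum_distrib_left mult_ac)

lemma inner_mult_vec_eq_inner_outer:
  fixes A :: "real^'n^'n"
  shows "x \<bullet> (A *v x) = A \<bullet> (\<chi> i j. x$i * x$j)"
  unfolding inner_mult_vec_eq_sum inner_matrix_eq_sum by (simp add: mult_ac)

lemma frob_eq_inner: "sym_mat X \<Longrightarrow> frob A X = A \<bullet> X"
  unfolding frob_def trace_def matrix_matrix_mult_def inner_matrix_eq_sum sym_mat_iff by simp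

lemma psd_imp_psd_on:
  assumes "psd X"
  shows "psd_on UNIV (\<lambda>i j. X$i$j)"
proof -
  have "0 \<le> bilinear_form UNIV (\<lambda>i j. X$i$j) x x" for x
  proof -
    have "0 \<le> (\<chi> i. x i) \<bullet> (X *v (\<chi> i. x i))" using assms unfolding psd_def by blast
    then show ?thesis unfolding inner_mult_vec_eq_sum bilinear_form_def by simp
  qed
  then show ?thesis using assms unfolding psd_def psd_on_def sym_mat_iff by blast
qed

lemma psd_inner_nonneg:
  assumes "psd S" "psd X"
  shows "0 \<le> S \<bullet> X"
  unfolding inner_matrix_eq_sum
  by (rule psd_on_frobenius_nonneg[OF finite_class.finite_UNIV
        psd_imp_psd_on[OF assms(1)] psd_imp_psd_on[OF assms(2)]])

lemma psd_outer: "psd (\<chi> i j. x$i * x$j)"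
proof -
  have "y \<bullet> ((\<chi> i j. x$i * x$j) *v y) = (x \<bullet> y)\<^sup>2" for y
    unfolding inner_mult_vec_eq_sum
    unfolding power2_eq_square inner_vec_def sum_product by (simp add: inner_real_def mult_ac)
  then show ?thesis unfolding psd_def sym_mat_iff by (simp add: mult.commute)
qed

lemma convex_cone_psd: "convex_cone {X :: real^'n^'n. psd X}"
  unfolding convex_cone_iff psd_def sym_mat_iff
  by (simp add: matrix_vector_mult_add_rdistrib inner_add_right
      scaleR_matrix_vector_assoc[symmetric])

lemma closed_psd: "closed {X :: real^'n^'n. psd X}"
proof -
  have "{X :: real^'n^'n. psd X} =
      {X. \<forall>i j. X$i$j = X$j$i}
      \<inter> {X. \<forall>x. 0 \<le> (\<Sum>i\<in>UNIV. \<Sum>j\<in>UNIV. x$i * X$i$j * x$j)}"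
    unfolding psd_def sym_mat_iff inner_mult_vec_eq_sum by auto
  also have "closed \<dots>"
    by (intro closed_Int closed_Collect_all closed_Collect_eq closed_Collect_le continuous_intros)
  finally show ?thesis .
qed

lemma inner_transpose_transpose:
  fixes A X :: "real^'n^'m"
  shows "transpose A \<bullet> transpose X = A \<bullet> X"
  unfolding transpose_def inner_matrix_eq_sum by (simp, subst sum.swap, simp)

lemma inner_symmetrize: "sym_mat X \<Longrightarrow> ((1/2) *\<^sub>R (S + transpose S)) \<bullet> X = S \<bullet> X"
  using inner_transpose_transpose[of S X] unfolding sym_mat_def
  by (simp add: inner_add_left)

lemma psd_symmetrize_if_nonneg_on_psd:
  fixes S :: "real^'n^'n"
  assumes "\<forall>Y. psd Y \<longrightarrow> 0 \<le> S \<bullet> Y"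
  shows "psd ((1/2) *\<^sub>R (S + transpose S))"
proof -
  have "sym_mat ((1/2) *\<^sub>R (S + transpose S))"
    unfolding sym_mat_iff transpose_def by (simp add: add.commute)
  moreover have "0 \<le> x \<bullet> ((1/2) *\<^sub>R (S + transpose S) *v x)" for x
  proof -
    have "sym_mat (\<chi> i j. x$i * x$j)" unfolding sym_mat_iff by (simp add: mult.commute)
    then have "x \<bullet> ((1/2) *\<^sub>R (S + transpose S) *v x) = S \<bullet> (\<chi> i j. x$i * x$j)"
      unfolding inner_mult_vec_eq_inner_outer by (rule inner_symmetrize)
    then show ?thesis using assms psd_outer by metis
  qed
  ultimately show ?thesis unfolding psd_def by blast
qed

lemma nonpos_if_bounded_on_ray:
  fixes a b d :: real
  assumes "\<forall>t\<ge>0. a < b - t * d"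
  shows "d \<le> 0"
proof (rule ccontr)
  assume "\<not> d \<le> 0"
  moreover from assms have "a < b" by (metis diff_zero mult_zero_left order.refl)
  ultimately have "0 \<le> (b - a) / d" by simp
  with assms \<open>\<not> d \<le> 0\<close> show False by auto
qed

lemma in_span_if_orthogonal_to_annihilator:
  fixes M :: "'a::euclidean_space"
  assumes "\<And>D. \<forall>a\<in>S. a \<bullet> D = 0 \<Longrightarrow> M \<bullet> D = 0"
  shows "M \<in> span S"
proof -
  have "M \<in> orthogonal_comp (orthogonal_comp (span S))"
    unfolding orthogonal_comp_def orthogonal_def
  proof (intro CollectI ballI)
    fix D assume "D \<in> {x. \<forall>y\<in>span S. y \<bullet> x = 0}"
    then have "\<forall>a\<in>S. a \<bullet> D = 0" using span_base by blast
    then show "D \<bullet> M = 0" using assms by (simp add: inner_commute)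
  qed
  then show ?thesis by (simp add: orthogonal_comp_self)
qed

lemma span_image_eq_range_sum:
  assumes "finite I"
  shows "span (A ` I) = range (\<lambda>lam. \<Sum>k\<in>I. lam k *\<^sub>R A k)"
proof
  show "span (A ` I) \<subseteq> range (\<lambda>lam. \<Sum>k\<in>I. lam k *\<^sub>R A k)"
  proof
    fix x assume "x \<in> span (A ` I)"
    then show "x \<in> range (\<lambda>lam. \<Sum>k\<in>I. lam k *\<^sub>R A k)"
    proof (induction rule: span_induct_alt)
      case base
      show ?case by (rule range_eqI[of _ _ "\<lambda>_. 0"]) simp
    next
      case (step c a y)
      then obtain k lam where "k \<in> I" "a = A k" "y = (\<Sum>j\<in>I. lam j *\<^sub>R A j)" by auto
      then have "c *\<^sub>R a + y = (\<Sum>j\<in>I. (lam j + (if j = k then c else 0)) *\<^sub>R A j)"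
        using assms
        by (simp add: scaleR_add_left sum.distrib if_distrib[of "\<lambda>r. r *\<^sub>R _"] cong: if_cong)
      then show ?case by (rule range_eqI[where x="\<lambda>j. lam j + (if j = k then c else 0)"])
    qed
  qed
  show "range (\<lambda>lam. \<Sum>k\<in>I. lam k *\<^sub>R A k) \<subseteq> span (A ` I)"
    by (clarify, intro span_sum span_mul span_base imageI)
qed

lemma separate_from_value_set:
  fixes C :: "'a::euclidean_space"
  assumes "compact Q" "convex Q" "closed K" "convex K" "closed L" "convex L"
    and above: "\<forall>X\<in>Q \<inter> K \<inter> L. r < C \<bullet> X"
  obtains \<alpha> S M where "\<And>X s Y W. X \<in> Q \<Longrightarrow> 0 \<le> s \<Longrightarrow> Y \<in> K \<Longrightarrow> W \<in> L \<Longrightarrow>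
    \<alpha> * r < \<alpha> * (C \<bullet> X + s) + S \<bullet> (X - Y) + M \<bullet> (X - W)"
proof -
  \<comment> \<open>A point \<open>(r, 0, 0)\<close> of \<open>T\<close> would be a point of \<open>Q \<inter> K \<inter> L\<close> with objective value at most \<open>r\<close>.\<close>
  define T where "T = (\<Union>x\<in>(\<lambda>X. (C \<bullet> X, X, X)) ` Q.
    \<Union>y\<in>{0..} \<times> uminus ` K \<times> uminus ` L. {x + y})"
  have lin: "linear (\<lambda>X. (C \<bullet> X, X, X))"
    by (rule linearI) (simp_all add: inner_add_right)
  have "closed T"
    unfolding T_def using assms(1,3,5)
    by (intro compact_closed_sums compact_continuous_image closed_Times closed_negations
        continuous_intros) simp_all
  moreover have "convex T"
    unfolding T_def using assms(2,4,6)
    by (intro convex_sums convex_linear_image[OF lin] convex_Times convex_negations) simp_all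
  moreover have "(r, 0, 0) \<notin> T"
  proof
    assume "(r, 0, 0) \<in> T"
    then obtain X s Y W where "X \<in> Q" "0 \<le> s" "Y \<in> K" "W \<in> L"
      and "(r, 0, 0) = (C \<bullet> X + s, X - Y, X - W)"
      unfolding T_def by force
    then show False using above by force
  qed
  ultimately obtain a b where sep: "a \<bullet> (r, 0, 0) < b" "\<forall>x\<in>T. b < a \<bullet> x"
    using separating_hyperplane_closed_point by blast
  obtain \<alpha> S M where a: "a = (\<alpha>, S, M)" by (cases a) auto
  show thesis
  proof (rule that)
    fix X Y W and s :: real
    assume "X \<in> Q" "0 \<le> s" "Y \<in> K" "W \<in> L"
    then have "(C \<bullet> X + s, X - Y, X - W) \<in> T" unfolding T_def by force
    with sep show "\<alpha> * r < \<alpha> * (C \<bullet> X + s) + S \<bullet> (X - Y) + M \<bullet> (X - W)"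
      unfolding a by fastforce
  qed
qed

lemma conic_lagrange_multipliers:
  fixes C Xh :: "'a::euclidean_space" and A :: "nat \<Rightarrow> 'a"
  assumes "compact Q" "convex Q" "closed K" "convex_cone K"
    and Xh: "Xh \<in> Q" "Xh \<in> K" "\<forall>k<m. A k \<bullet> Xh = b k"
    and opt: "\<And>X. X \<in> Q \<Longrightarrow> X \<in> K \<Longrightarrow> \<forall>k<m. A k \<bullet> X = b k \<Longrightarrow> C \<bullet> Xh \<le> C \<bullet> X"
    and "r < C \<bullet> Xh"
  obtains S lam where "\<forall>Y\<in>K. 0 \<le> S \<bullet> Y"
    and "\<forall>X\<in>Q. r \<le> C \<bullet> X - S \<bullet> X + (\<Sum>k<m. lam k * (A k \<bullet> X - b k))"
proof -
  define L where "L = (\<Inter>k<m. {W. A k \<bullet> W = b k})"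
  have "closed L" "convex L"
    unfolding L_def by (auto intro!: closed_INT closed_hyperplane convex_INT convex_hyperplane)
  moreover have "convex K" using assms(4) by (simp add: convex_cone_def)
  moreover have "\<forall>X\<in>Q \<inter> K \<inter> L. r < C \<bullet> X"
    using opt \<open>r < C \<bullet> Xh\<close> unfolding L_def by fastforce
  ultimately obtain \<alpha> S M
    where sep: "\<And>X s Y W. X \<in> Q \<Longrightarrow> 0 \<le> s \<Longrightarrow> Y \<in> K \<Longrightarrow> W \<in> L \<Longrightarrow>
      \<alpha> * r < \<alpha> * (C \<bullet> X + s) + S \<bullet> (X - Y) + M \<bullet> (X - W)"
    using separate_from_value_set[OF assms(1-3)] by blast
  have "Xh \<in> L" using Xh unfolding L_def by simp
  have "\<alpha> * r < \<alpha> * (C \<bullet> Xh)"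
    using sep[OF Xh(1) order.refl Xh(2) \<open>Xh \<in> L\<close>] by simp
  with \<open>r < C \<bullet> Xh\<close> have "0 < \<alpha>" by (simp add: mult_less_cancel_left)
  \<comment> \<open>Fixing \<open>X = Xh\<close> and sliding \<open>Y\<close> (resp. \<open>W\<close>) along a ray from \<open>Xh\<close> inside \<open>K\<close> (resp. \<open>L\<close>)
    keeps the right-hand side above \<open>\<alpha> * r\<close> only if \<open>S\<close> is nonpositive on \<open>K\<close> (resp. \<open>M\<close>
    vanishes on the directions of \<open>L\<close>).\<close>
  have S_polar: "S \<bullet> Y \<le> 0" if "Y \<in> K" for Y
  proof (rule nonpos_if_bounded_on_ray, intro allI impI)
    fix t :: real assume "0 \<le> t"
    with that assms(4) Xh(2) have "Xh + t *\<^sub>R Y \<in> K"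
      unfolding convex_cone_iff by blast
    from sep[OF Xh(1) order.refl this \<open>Xh \<in> L\<close>]
    show "\<alpha> * r < \<alpha> * (C \<bullet> Xh) - t * (S \<bullet> Y)" by simp
  qed
  have M_perp: "M \<bullet> D \<le> 0" if "\<forall>k<m. A k \<bullet> D = 0" for D
  proof (rule nonpos_if_bounded_on_ray, intro allI impI)
    fix t :: real assume "0 \<le> t"
    have "Xh + t *\<^sub>R D \<in> L" using Xh(3) that unfolding L_def by (simp add: inner_add_right)
    from sep[OF Xh(1) order.refl Xh(2) this]
    show "\<alpha> * r < \<alpha> * (C \<bullet> Xh) - t * (M \<bullet> D)" by simp
  qed
  have "M \<in> span (A ` {..<m})"
  proof (rule in_span_if_orthogonal_to_annihilator)
    fix D assume "\<forall>a\<in>A ` {..<m}. a \<bullet> D = 0"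
    then have "M \<bullet> D \<le> 0" "M \<bullet> (- D) \<le> 0" using M_perp[of D] M_perp[of "- D"] by auto
    then show "M \<bullet> D = 0" by simp
  qed
  then obtain lam where M: "M = (\<Sum>k<m. lam k *\<^sub>R A k)"
    by (auto simp: span_image_eq_range_sum)
  show thesis
  proof (rule that[of "- (1 / \<alpha>) *\<^sub>R S" "\<lambda>k. lam k / \<alpha>"])
    show "\<forall>Y\<in>K. 0 \<le> (- (1 / \<alpha>) *\<^sub>R S) \<bullet> Y"
      using S_polar \<open>0 < \<alpha>\<close> by (simp add: divide_nonpos_pos)
    show "\<forall>X\<in>Q. r \<le> C \<bullet> X - (- (1 / \<alpha>) *\<^sub>R S) \<bullet> X
        + (\<Sum>k<m. lam k / \<alpha> * (A k \<bullet> X - b k))"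
    proof
      fix X assume "X \<in> Q"
      have "0 \<in> K" using assms(4) unfolding convex_cone_iff by blast
      from sep[OF \<open>X \<in> Q\<close> order.refl this \<open>Xh \<in> L\<close>]
      have "\<alpha> * r < \<alpha> * (C \<bullet> X) + S \<bullet> X + (\<Sum>k<m. lam k * (A k \<bullet> X - b k))"
        using Xh(3)
        by (simp add: M inner_sum_left inner_diff_right right_diff_distrib sum_subtractf)
      also have "\<dots> = \<alpha> * (C \<bullet> X - (- (1 / \<alpha>) *\<^sub>R S) \<bullet> X
          + (\<Sum>k<m. lam k / \<alpha> * (A k \<bullet> X - b k)))"
        using \<open>0 < \<alpha>\<close> by (simp add: distrib_left sum_distrib_left)
      finally show "r \<le> C \<bullet> X - (- (1 / \<alpha>) *\<^sub>R S) \<bullet> X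
          + (\<Sum>k<m. lam k / \<alpha> * (A k \<bullet> X - b k))"
        using \<open>0 < \<alpha>\<close> by simp
    qed
  qed
qed

lemma closed_Pset:
  fixes A2 :: "nat \<Rightarrow> real^'n^'n" and B :: "'n \<Rightarrow> 'n \<Rightarrow> int set"
  assumes "\<forall>(i,j)\<in>J. finite (B i j)"
  shows "closed (Pset m2 A2 b2 J B)"
proof -
  have "Pset m2 A2 b2 J B = {X. sym_mat X}
      \<inter> (\<Inter>k<m2. {X. frob (A2 k) X = b2 k})
      \<inter> (\<Inter>(i,j)\<in>J. (\<lambda>X. X$i$j) -` (real_of_int ` B i j))"
    unfolding Pset_def by auto
  also have "closed \<dots>"
  proof (intro closed_Int closed_INT ballI)
    show "closed {X :: real^'n^'n. sym_mat X}"
      unfolding sym_mat_iff by (intro closed_Collect_all closed_Collect_eq continuous_intros)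
    show "closed {X. frob (A2 k) X = b2 k}" for k
      unfolding frob_def trace_def matrix_matrix_mult_def
      by (intro closed_Collect_eq continuous_intros)
    fix p assume "p \<in> J"
    obtain i j where p: "p = (i, j)" by fastforce
    have "finite (B i j)" using assms \<open>p \<in> J\<close> unfolding p by auto
    then have "closed (real_of_int ` B i j)" by (intro finite_imp_closed finite_imageI)
    then show "closed (case p of (i, j) \<Rightarrow> (\<lambda>X :: real^'n^'n. X$i$j) -` real_of_int ` B i j)"
      unfolding p prod.case by (rule closed_vimage) (intro continuous_intros)
  qed
  finally show ?thesis .
qed

lemma INF_affine_le_convex_hull:
  fixes G :: "'a::real_inner"
  assumes "Y \<in> convex hull P"
  shows "(INF X\<in>P. ereal (G \<bullet> X + d)) \<le> ereal (G \<bullet> Y + d)"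
proof (rule ccontr)
  assume "\<not> ?thesis"
  then have below: "ereal (G \<bullet> Y + d) < (INF X\<in>P. ereal (G \<bullet> X + d))" by simp
  have "G \<bullet> Y < G \<bullet> X" if "X \<in> P" for X
  proof -
    have "ereal (G \<bullet> Y + d) < ereal (G \<bullet> X + d)"
      using below INF_lower[OF that, of "\<lambda>X. ereal (G \<bullet> X + d)"] by (rule less_le_trans)
    then show ?thesis by simp
  qed
  then have "P \<subseteq> {X. G \<bullet> Y < G \<bullet> X}" by blast
  then have "convex hull P \<subseteq> {X. G \<bullet> Y < G \<bullet> X}"
    by (intro hull_minimal convex_halfspace_gt)
  with assms show False by auto
qed

lemma relax_feas_iff:
  "X \<in> relax_feas m1 A1 b1 P \<longleftrightarrow>
    X \<in> convex hull P \<and> psd X \<and> (\<forall>k<m1. A1 k \<bullet> X = b1 k)"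
  unfolding relax_feas_def psd_def by (auto simp: frob_eq_inner)

lemma lagrangian_eq_inner:
  fixes C S X :: "real^'n^'n"
  shows "sym_mat X \<Longrightarrow> frob C X - frob S X + (\<Sum>k<m. lam k * (frob (A k) X - b k))
    = (C - S + (\<Sum>k<m. lam k *\<^sub>R A k)) \<bullet> X - (\<Sum>k<m. lam k * b k)"
  by (simp add: frob_eq_inner inner_diff_left inner_add_left inner_sum_left right_diff_distrib
      sum_subtractf)

lemma z_LD_le_relax:
  fixes P :: "(real^'n^'n) set"
  assumes "\<forall>X\<in>P. sym_mat X" "Y \<in> relax_feas m1 A1 b1 P"
  shows "z_LD C m1 A1 b1 P \<le> ereal (frob C Y)"
  unfolding z_LD_def
proof (rule SUP_least, clarify)
  fix S :: "real^'n^'n" and lam :: "nat \<Rightarrow> real"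
  assume "psd S"
  have Y: "Y \<in> convex hull P" "psd Y" "\<forall>k<m1. A1 k \<bullet> Y = b1 k" "sym_mat Y"
    using assms(2) unfolding relax_feas_iff psd_def by auto
  let ?G = "C - S + (\<Sum>k<m1. lam k *\<^sub>R A1 k)" and ?d = "- (\<Sum>k<m1. lam k * b1 k)"
  have "lag_g C m1 A1 b1 P S lam = (INF X\<in>P. ereal (?G \<bullet> X + ?d))"
    unfolding lag_g_def using assms(1) by (intro INF_cong) (simp_all add: lagrangian_eq_inner)
  also have "\<dots> \<le> ereal (?G \<bullet> Y + ?d)"
    using Y(1) by (rule INF_affine_le_convex_hull)
  also have "?G \<bullet> Y + ?d = frob C Y - S \<bullet> Y"
    using Y lagrangian_eq_inner[OF Y(4), where C=C and S=S and lam=lam and m=m1 and A=A1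
        and b=b1]
    by (simp add: frob_eq_inner)
  also have "\<dots> \<le> frob C Y"
    using psd_inner_nonneg[OF \<open>psd S\<close> Y(2)] by simp
  finally show "lag_g C m1 A1 b1 P S lam \<le> ereal (frob C Y)" by simp
qed

lemma le_z_LD:
  assumes "\<forall>X\<in>P. sym_mat X" "\<forall>Y. psd Y \<longrightarrow> 0 \<le> S \<bullet> Y"
    and "\<forall>X\<in>P. r \<le> C \<bullet> X - S \<bullet> X + (\<Sum>k<m1. lam k * (A1 k \<bullet> X - b1 k))"
  shows "ereal r \<le> z_LD C m1 A1 b1 P"
proof -
  let ?S = "(1/2) *\<^sub>R (S + transpose S)"
  have "frob ?S X = S \<bullet> X" if "sym_mat X" for X
    using that by (simp only: frob_eq_inner inner_symmetrize)
  then have "ereal r \<le> lag_g C m1 A1 b1 P ?S lam"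
    unfolding lag_g_def using assms(1,3) by (intro INF_greatest) (simp add: frob_eq_inner)
  also have "\<dots> \<le> z_LD C m1 A1 b1 P"
    unfolding z_LD_def using psd_symmetrize_if_nonneg_on_psd[OF assms(2)]
    by (intro SUP_upper2[of "(?S, lam)"]) auto
  finally show ?thesis .
qed

lemma relax_le_z_LD:
  fixes P :: "(real^'n^'n) set"
  assumes "compact P" "\<forall>X\<in>P. sym_mat X" "Xh \<in> relax_feas m1 A1 b1 P"
    and opt: "\<forall>X\<in>relax_feas m1 A1 b1 P. frob C Xh \<le> frob C X"
  shows "ereal (frob C Xh) \<le> z_LD C m1 A1 b1 P"
proof (rule dense_le)
  have Xh: "Xh \<in> convex hull P" "Xh \<in> {Y. psd Y}" "\<forall>k<m1. A1 k \<bullet> Xh = b1 k"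
    using assms(3) unfolding relax_feas_iff by auto
  have c: "frob C Xh = C \<bullet> Xh" using Xh(2) by (simp add: psd_def frob_eq_inner)
  have opt_inner: "C \<bullet> Xh \<le> C \<bullet> X"
    if "X \<in> convex hull P" "X \<in> {Y. psd Y}" "\<forall>k<m1. A1 k \<bullet> X = b1 k" for X
  proof -
    have "frob C Xh \<le> frob C X" using opt that by (simp add: relax_feas_iff)
    with c that(2) show ?thesis by (simp add: psd_def frob_eq_inner)
  qed
  fix x assume "x < ereal (frob C Xh)"
  then obtain r where "x < ereal r" "r < C \<bullet> Xh"
    using ereal_dense2 c by fastforce
  obtain S lam where "\<forall>Y\<in>{Y. psd Y}. 0 \<le> S \<bullet> Y"
    and "\<forall>X\<in>convex hull P. r \<le> C \<bullet> X - S \<bullet> X + (\<Sum>k<m1. lam k * (A1 k \<bullet> X - b1 k))"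
    by (rule conic_lagrange_multipliers[OF compact_convex_hull[OF assms(1)] convex_convex_hull
        closed_psd convex_cone_psd Xh opt_inner \<open>r < C \<bullet> Xh\<close>])
  then have "ereal r \<le> z_LD C m1 A1 b1 P"
    using assms(2) by (intro le_z_LD) (auto intro: hull_inc)
  with \<open>x < ereal r\<close> show "x \<le> z_LD C m1 A1 b1 P" by simp
qed

theorem theorem1:
  fixes C :: "real^'n^'n"
    and m1 m2 :: nat
    and A1 A2 :: "nat \<Rightarrow> real^'n^'n"
    and b1 b2 :: "nat \<Rightarrow> real"
    and J :: "('n \<times> 'n) set"
    and B :: "'n \<Rightarrow> 'n \<Rightarrow> int set"
    and Xh :: "real^'n^'n"
  assumes C_sym: "sym_mat C"
    and A1_sym: "\<forall>k<m1. sym_mat (A1 k)"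
    and A2_sym: "\<forall>k<m2. sym_mat (A2 k)"
    and B_fin: "\<forall>(i,j)\<in>J. finite (B i j)"
    and P_bdd: "bounded (Pset m2 A2 b2 J B)"
    and feas_ne: "misdp_feas m1 A1 b1 m2 A2 b2 J B \<noteq> {}"
    and feas_bdd: "bounded (misdp_feas m1 A1 b1 m2 A2 b2 J B)"
    and Xh_feas: "Xh \<in> relax_feas m1 A1 b1 (Pset m2 A2 b2 J B)"
    and Xh_opt: "\<forall>X \<in> relax_feas m1 A1 b1 (Pset m2 A2 b2 J B). frob C Xh \<le> frob C X"
  shows "z_LD C m1 A1 b1 (Pset m2 A2 b2 J B) = ereal (frob C Xh)"
proof (rule antisym)
  let ?P = "Pset m2 A2 b2 J B"
  have P_sym: "\<forall>X\<in>?P. sym_mat X" unfolding Pset_def by auto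
  have "compact ?P" using P_bdd closed_Pset[OF B_fin] by (simp add: compact_eq_bounded_closed)
  show "z_LD C m1 A1 b1 ?P \<le> ereal (frob C Xh)"
    using P_sym Xh_feas by (rule z_LD_le_relax)
  show "ereal (frob C Xh) \<le> z_LD C m1 A1 b1 ?P"
    using \<open>compact ?P\<close> P_sym Xh_feas Xh_opt by (rule relax_le_z_LD)
qed

end
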